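(* Let $n,m\ge1$ and $A\subseteq\Omega_n$. If $\mu_n(A)=0$, then $\mu_{n+m}(A\times\{0,1\}^m)=0$.
   Context: For $n\ge1$, $\Omega_n$ is the set of strings $\omega=\alpha_0\alpha_1\cdots\alpha_n$ with $\alpha_k\in\{0,1\}$, $\alpha_0=0$. For $\omega=\alpha_0\cdots\alpha_n$, $\omega'=\alpha'_0\cdots\alpha'_n\in\Omega_n$ let $D^n(\omega,\omega')=2^{-n}\prod_{k=1}^n i^{|\alpha_k-\alpha_{k-1}|}\prod_{k=1}^n i^{-|\alpha'_k-\alpha'_{k-1}|}\,\delta_{\alpha_n\alpha'_n}$ ($i=\sqrt{-1}$), and for $A\subseteq\Omega_n$ let $\mu_n(A)=\sum_{\omega,\omega'\in A}D^n(\omega,\omega')$ ($A$ is called precluded if $\mu_n(A)=0$). For $A\subseteq\Omega_n$, $A\times\{0,1\}^m\subseteq\Omega_{n+m}$ is the set of strings obtained by appending to the right of some $\omega\in A$ an arbitrary string of $m$ bits. *)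

theory Defs
  imports Complex_Main
begin

definition Omega :: "nat \<Rightarrow> nat list set" where
  "Omega n = {w. length w = Suc n \<and> w ! 0 = 0 \<and> set w \<subseteq> {0, 1}}"

definition D :: "nat \<Rightarrow> nat list \<Rightarrow> nat list \<Rightarrow> complex" where
  "D n w w' = (1 / 2 ^ n)
     * (\<Prod>k\<in>{1..n}. \<i> ^ nat \<bar>int (w ! k) - int (w ! (k - 1))\<bar>)
     * (\<Prod>k\<in>{1..n}. \<i> powi (- \<bar>int (w' ! k) - int (w' ! (k - 1))\<bar>))
     * (if w ! n = w' ! n then 1 else 0)"

definition mu :: "nat \<Rightarrow> nat list set \<Rightarrow> complex" where
  "mu n A = (\<Sum>w\<in>A. \<Sum>w'\<in>A. D n w w')"

text \<open>A \<times> {0,1}^m: append an arbitrary string of m bits to the right of some element of A.\<close>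
definition ext :: "nat list set \<Rightarrow> nat \<Rightarrow> nat list set" where
  "ext A m = {w @ v | w v. w \<in> A \<and> length v = m \<and> set v \<subseteq> {0, 1}}"

end

theory Submission
  imports Defs
begin

(* Write a(w) for the product of the factors i^|a_k - a_(k-1)|, so that
   D^n(w,w') = 2^-n a(w) cnj(a(w')) [a_n = a'_n].  Appending a bit b multiplies a(w) by
   i^|b - a_n|, and the 2x2 matrix (i^|b - a|)/sqrt 2 is unitary, so summing D^(n+1) over the
   two appended bits gives back D^n. *)

definition path_amplitude :: "nat \<Rightarrow> nat list \<Rightarrow> complex" where
  "path_amplitude n w = (\<Prod>k\<in>{1..n}. \<i> ^ nat \<bar>int (w ! k) - int (w ! (k - 1))\<bar>)"

lemma i_powi_neg_abs: "\<i> powi (- \<bar>k\<bar>) = cnj (\<i> ^ nat \<bar>k\<bar>)"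
proof -
  have "\<i> powi (- \<bar>k\<bar>) = inverse \<i> ^ nat \<bar>k\<bar>"
    by (simp add: power_int_minus power_int_def power_inverse)
  then show ?thesis by (simp add: inverse_eq_divide)
qed

lemma cnj_path_amplitude:
  "cnj (path_amplitude n w) = (\<Prod>k\<in>{1..n}. \<i> powi (- \<bar>int (w ! k) - int (w ! (k - 1))\<bar>))"
  unfolding path_amplitude_def cnj_prod by (rule prod.cong[OF refl i_powi_neg_abs[symmetric]])

lemma D_eq_path_amplitude:
  "D n w w' = path_amplitude n w * cnj (path_amplitude n w') / 2 ^ n
              * (if w ! n = w' ! n then 1 else 0)"
  unfolding D_def cnj_path_amplitude[symmetric] path_amplitude_def[symmetric] by simp

lemma path_amplitude_snoc:
  assumes "length w = Suc n"
  shows "path_amplitude (Suc n) (w @ [b]) = path_amplitude n w * \<i> ^ nat \<bar>int b - int (w ! n)\<bar>"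
proof -
  have "path_amplitude (Suc n) (w @ [b])
        = (\<Prod>k\<in>{1..n}. \<i> ^ nat \<bar>int ((w @ [b]) ! k) - int ((w @ [b]) ! (k - 1))\<bar>)
          * \<i> ^ nat \<bar>int b - int (w ! n)\<bar>"
    unfolding path_amplitude_def using assms by (simp add: atLeastAtMostSuc_conv nth_append)
  also have "(\<Prod>k\<in>{1..n}. \<i> ^ nat \<bar>int ((w @ [b]) ! k) - int ((w @ [b]) ! (k - 1))\<bar>)
             = path_amplitude n w"
    unfolding path_amplitude_def using assms by (intro prod.cong) (auto simp: nth_append)
  finally show ?thesis .
qed

lemma bit_step_unitary:
  assumes "a \<in> {0, 1}" and "a' \<in> {0, 1 :: nat}"
  shows "(\<Sum>b\<in>{0, 1 :: nat}. \<i> ^ nat \<bar>int b - int a\<bar> * cnj (\<i> ^ nat \<bar>int b - int a'\<bar>))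
         = (if a = a' then 2 else 0)"
  using assms by auto

lemma D_snoc_sum:
  assumes "length w = Suc n" and "length w' = Suc n"
    and "w ! n \<in> {0, 1}" and "w' ! n \<in> {0, 1}"
  shows "(\<Sum>b\<in>{0, 1 :: nat}. \<Sum>b'\<in>{0, 1 :: nat}. D (Suc n) (w @ [b]) (w' @ [b'])) = D n w w'"
proof -
  let ?c = "path_amplitude n w * cnj (path_amplitude n w') / 2 ^ Suc n"
  let ?t = "\<lambda>b. \<i> ^ nat \<bar>int b - int (w ! n)\<bar> * cnj (\<i> ^ nat \<bar>int b - int (w' ! n)\<bar>)"
  have "(\<Sum>b\<in>{0, 1 :: nat}. \<Sum>b'\<in>{0, 1 :: nat}. D (Suc n) (w @ [b]) (w' @ [b']))
        = (\<Sum>b\<in>{0, 1 :: nat}. ?c * ?t b)"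
    using assms by (simp add: D_eq_path_amplitude path_amplitude_snoc nth_append mult_ac)
  also have "\<dots> = ?c * (if w ! n = w' ! n then 2 else 0)"
    by (simp only: sum_distrib_left[symmetric] bit_step_unitary[OF assms(3,4)])
  also have "\<dots> = D n w w'"
    by (simp add: D_eq_path_amplitude)
  finally show ?thesis .
qed

lemma ext_0 [simp]: "ext A 0 = A"
  unfolding ext_def by auto

lemma ext_1: "ext A 1 = (\<lambda>(w, b). w @ [b]) ` (A \<times> {0, 1})"
  unfolding ext_def by (fastforce simp: length_Suc_conv)

lemma ext_Suc: "ext A (Suc m) = ext (ext A m) 1"
proof (intro set_eqI iffI)
  fix u assume "u \<in> ext A (Suc m)"
  then obtain w v where u: "u = w @ v" "w \<in> A" "length v = Suc m" "set v \<subseteq> {0, 1}"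
    unfolding ext_def by blast
  then obtain v' b where v: "v = v' @ [b]" by (cases v rule: rev_cases) auto
  have "w @ v' \<in> ext A m" unfolding ext_def using u v by auto
  moreover have "u = (w @ v') @ [b]" "length [b] = 1" "set [b] \<subseteq> {0, 1}" using u v by auto
  ultimately show "u \<in> ext (ext A m) 1" unfolding ext_def by blast
next
  fix u assume "u \<in> ext (ext A m) 1"
  then obtain w v' v where "u = (w @ v') @ v" "w \<in> A" "length v' = m" "set v' \<subseteq> {0, 1}"
    "length v = 1" "set v \<subseteq> {0, 1}"
    unfolding ext_def by blast
  then have "u = w @ (v' @ v)" "length (v' @ v) = Suc m" "set (v' @ v) \<subseteq> {0, 1}" "w \<in> A"
    by auto
  then show "u \<in> ext A (Suc m)" unfolding ext_def by blast
qed

lemma ext_subset_Omega: "A \<subseteq> Omega n \<Longrightarrow> ext A m \<subseteq> Omega (n + m)"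
  unfolding ext_def Omega_def by (auto simp: nth_append; blast)

lemma mu_ext_1:
  assumes "A \<subseteq> Omega n"
  shows "mu (Suc n) (ext A 1) = mu n A"
proof -
  have Omega_facts: "length w = Suc n" "w ! n \<in> {0, 1}" if "w \<in> A" for w
  proof -
    from assms that have "length w = Suc n" "set w \<subseteq> {0, 1}"
      unfolding Omega_def by blast+
    moreover from this have "w ! n \<in> set w" by simp
    ultimately show "length w = Suc n" "w ! n \<in> {0, 1}" by blast+
  qed
  have inj: "inj_on (\<lambda>(w, b). w @ [b]) (A \<times> {0, 1 :: nat})"
    by (auto simp: inj_on_def)
  have "mu (Suc n) (ext A 1)
        = (\<Sum>(w, b)\<in>A \<times> {0, 1}. \<Sum>(w', b')\<in>A \<times> {0, 1}. D (Suc n) (w @ [b]) (w' @ [b']))"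
    unfolding mu_def ext_1 sum.reindex[OF inj] o_def by (simp only: case_prod_unfold)
  also have "\<dots> = (\<Sum>w\<in>A. \<Sum>w'\<in>A. \<Sum>b\<in>{0, 1}. \<Sum>b'\<in>{0, 1}. D (Suc n) (w @ [b]) (w' @ [b']))"
    by (simp only: sum.cartesian_product' prod.case sum.swap[of _ "{0, 1}" A])
  also have "\<dots> = mu n A"
    unfolding mu_def by (intro sum.cong refl D_snoc_sum Omega_facts)
  finally show ?thesis .
qed

lemma mu_ext: "A \<subseteq> Omega n \<Longrightarrow> mu (n + m) (ext A m) = mu n A"
proof (induction m)
  case (Suc m)
  have "mu (n + Suc m) (ext A (Suc m)) = mu (Suc (n + m)) (ext (ext A m) 1)"
    by (simp only: ext_Suc add_Suc_right)
  also have "\<dots> = mu (n + m) (ext A m)"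
    by (rule mu_ext_1[OF ext_subset_Omega[OF Suc.prems]])
  finally show ?case using Suc by simp
qed simp

theorem corollary3p3:
  fixes n m :: nat and A :: "nat list set"
  assumes "n \<ge> 1" and "m \<ge> 1" and "A \<subseteq> Omega n" and "mu n A = 0"
  shows "mu (n + m) (ext A m) = 0"
  using mu_ext[OF assms(3)] assms(4) by simp

end
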